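(* Let $f\in\operatorname{NDPF}^{(1)}_N$ and let $F_f$ be the set of integers that are maximal elements of their fibers under $f$. If $m,m'$ are distinct elements of $F_f\cap\{1,2,\dots,N\}$, then $f(m)\not\equiv f(m')\pmod N$.
   Context: $\operatorname{NDPF}^{(1)}_N$ is the set of functions $f:\mathbb{Z}\to\mathbb{Z}$ that are regressive ($f(i)\le i$), order preserving and skew periodic ($f(i+N)=f(i)+N$), excluding the shift functions $i\mapsto i-t$ with $t\ne0$. The fiber of $i$ under $f$ is $f^{-1}(f(i))$. *)

theory Defs
  imports Main
begin

definition NDPF1 :: "nat \<Rightarrow> (int \<Rightarrow> int) set" where
  "NDPF1 N = {f. (\<forall>i. f i \<le> i)
              \<and> mono f
              \<and> (\<forall>i. f (i + int N) = f i + int N)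
              \<and> \<not> (\<exists>t. t \<noteq> 0 \<and> f = (\<lambda>i. i - t))}"

definition fiber :: "(int \<Rightarrow> int) \<Rightarrow> int \<Rightarrow> int set" where
  "fiber f i = f -` {f i}"

definition fiber_maxima :: "(int \<Rightarrow> int) \<Rightarrow> int set" where
  "fiber_maxima f = {i. \<forall>j \<in> fiber f i. j \<le> i}"

end

theory Submission
  imports Defs
begin

text \<open>A fiber maximum m below m' can only lie below m' in value: f m = f m' would put m'
  into the fiber of m. Applied to m < m' < m + N (with f (m + N) = f m + N) this squeezes
  f m' - f m strictly between 0 and N, so f m and f m' cannot be congruent mod N.\<close>

lemma fiber_maxima_less_imp_less:
  assumes "mono f" "m \<in> fiber_maxima f" "m < m'"
  shows "f m < f m'"
proof -
  have "f m \<le> f m'"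
    using assms(1,3) by (simp add: monoD)
  moreover have "f m \<noteq> f m'"
  proof
    assume "f m = f m'"
    then have "m' \<in> fiber f m"
      by (simp add: fiber_def)
    then show False
      using assms(2,3) by (auto simp: fiber_maxima_def)
  qed
  ultimately show ?thesis
    by simp
qed

lemma fiber_maxima_mod_neq:
  fixes N :: nat and f :: "int \<Rightarrow> int"
  assumes "mono f" and skew: "\<And>i. f (i + int N) = f i + int N"
    and "m \<in> fiber_maxima f" "m' \<in> fiber_maxima f"
    and "m < m'" "m' < m + int N"
  shows "f m mod int N \<noteq> f m' mod int N"
proof -
  have "0 < f m' - f m"
    using fiber_maxima_less_imp_less[OF assms(1,3,5)] by simp
  moreover have "f m' - f m < int N"
    using fiber_maxima_less_imp_less[OF assms(1,4,6)] skew[of m] by simp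
  ultimately have "\<not> int N dvd f m' - f m"
    by (rule zdvd_not_zless)
  then show ?thesis
    by (metis mod_eq_dvd_iff)
qed

theorem mainTheorem9:
  fixes N :: nat and f :: "int \<Rightarrow> int" and m m' :: int
  assumes "N \<ge> 1"
    and "f \<in> NDPF1 N"
    and "m \<in> fiber_maxima f \<inter> {1..int N}"
    and "m' \<in> fiber_maxima f \<inter> {1..int N}"
    and "m \<noteq> m'"
  shows "f m mod int N \<noteq> f m' mod int N"
proof -
  have mono: "mono f" and skew: "\<And>i. f (i + int N) = f i + int N"
    using assms(2) by (auto simp: NDPF1_def)
  show ?thesis
  proof (cases "m < m'")
    case True
    then show ?thesis
      using fiber_maxima_mod_neq[OF mono skew, of m m'] assms(3,4) by auto
  next
    case False
    then have "m' < m"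
      using assms(5) by simp
    then show ?thesis
      using fiber_maxima_mod_neq[OF mono skew, of m' m] assms(3,4) by auto
  qed
qed

end
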